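(* For $i\in\mathbb N$ and $j\in\mathbb N$ define $$l_{i,j}=\sum_{k=0}^{i-j}\binom{\frac{i-1}{2}+x-k}{k}\binom{\frac{i-1}{2}+k-x}{i-j-k}$$ (a quantity independent of $x$; equal to $0$ when $j>i$, as an empty sum). Then $l_{i,0}=(-1)^i$ and $l_{i,i}=1$ for all $i\in\mathbb N$, and $l_{i,j}=l_{i-1,j-1}+l_{i-1,j}$ for all $i\ge1$ and $1\le j\le i$.
   Context: For $z\in\mathbb C$ and $k\in\mathbb N$, $\binom{z}{k}=\frac{z(z-1)\cdots(z-k+1)}{k!}$. The sum defining $l_{i,j}$ is a polynomial in $x$ which is constant in $x$, so $l_{i,j}$ is a well-defined number (e.g. its value at $x=0$). *)

theory Defs
  imports Complex_Main
begin

definition lsum :: "nat \<Rightarrow> nat \<Rightarrow> complex \<Rightarrow> complex" where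
  "lsum i j x = (if j \<le> i then
     (\<Sum>k::nat = 0..i - j.
        (((of_nat i - 1) / 2 + x - of_nat k) gchoose k)
      * (((of_nat i - 1) / 2 + of_nat k - x) gchoose (i - j - k)))
   else 0)"

text \<open>l(i,j): the (x-independent) value, taken at x = 0.\<close>
definition l :: "nat \<Rightarrow> nat \<Rightarrow> complex" where
  "l i j = lsum i j 0"

end

theory Submission
  imports Defs "HOL-Computational_Algebra.Polynomial"
begin

text \<open>
  Write \<open>S A B n = \<Sum>\<^sub>k (A - k gchoose k) (B + k gchoose n - k)\<close>, so that
  \<open>l i j = S c c (i - j)\<close> with \<open>c = (i - 1)/2\<close>. Pascal's rule applied to the
  first, resp. the second factor gives two recurrences in \<open>n\<close>; together they show by
  induction that \<open>S A B n\<close> is unchanged when \<open>A\<close> is raised and \<open>B\<close> lowered by \<open>1\<close>.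
  As \<open>S (A + t) (B - t) n\<close> is a polynomial in \<open>t\<close> that is constant on the naturals,
  \<open>S A B n\<close> depends only on \<open>A + B\<close>. Hence \<open>l i j = S (i - 1) 0 (i - j)\<close>: the
  column \<open>j = 0\<close> is then a sum in which only the last term survives, and the
  recurrence in \<open>B\<close> becomes Pascal's rule for \<open>l\<close>.
\<close>

definition skew_gbinomial_sum :: "'a::field_char_0 \<Rightarrow> 'a \<Rightarrow> nat \<Rightarrow> 'a" where
  "skew_gbinomial_sum A B n = (\<Sum>k\<le>n. ((A - of_nat k) gchoose k) * ((B + of_nat k) gchoose (n - k)))"

lemma skew_gbinomial_sum_0 [simp]: "skew_gbinomial_sum A B 0 = 1"
  by (simp add: skew_gbinomial_sum_def)

lemma skew_gbinomial_sum_Suc_right: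
  "skew_gbinomial_sum A B (Suc n) = skew_gbinomial_sum A (B - 1) (Suc n) + skew_gbinomial_sum A (B - 1) n"
proof -
  have pascal: "(B + of_nat k) gchoose (Suc n - k) =
      ((B - 1 + of_nat k) gchoose (Suc n - k)) + ((B - 1 + of_nat k) gchoose (n - k))"
    if "k \<le> n" for k
  proof -
    have "Suc n - k = Suc (n - k)" using that by simp
    moreover have "B + of_nat k = (B - 1 + of_nat k) + 1" by simp
    ultimately show ?thesis by (metis gbinomial_Suc_Suc add.commute)
  qed
  have "skew_gbinomial_sum A B (Suc n) =
      (\<Sum>k\<le>n. ((A - of_nat k) gchoose k) * ((B + of_nat k) gchoose (Suc n - k)))
      + ((A - of_nat (Suc n)) gchoose (Suc n))"
    by (simp add: skew_gbinomial_sum_def)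
  also have "\<dots> = skew_gbinomial_sum A (B - 1) (Suc n) + skew_gbinomial_sum A (B - 1) n"
    by (simp add: skew_gbinomial_sum_def pascal distrib_left sum.distrib)
  finally show ?thesis .
qed

lemma skew_gbinomial_sum_Suc_left:
  "skew_gbinomial_sum A B (Suc n) = skew_gbinomial_sum (A - 1) B (Suc n) + skew_gbinomial_sum (A - 2) (B + 1) n"
proof -
  have split_first: "skew_gbinomial_sum C D (Suc n) = (D gchoose (Suc n)) +
      (\<Sum>k\<le>n. ((C - of_nat (Suc k)) gchoose (Suc k)) * ((D + of_nat (Suc k)) gchoose (n - k)))" for C D
    unfolding skew_gbinomial_sum_def by (subst sum.atMost_Suc_shift) simp
  have pascal: "(A - of_nat (Suc k)) gchoose (Suc k) =
      ((A - 1 - of_nat (Suc k)) gchoose (Suc k)) + ((A - 2 - of_nat k) gchoose k)" for k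
  proof -
    have "A - of_nat (Suc k) = (A - 1 - of_nat (Suc k)) + 1"
      and "A - 1 - of_nat (Suc k) = A - 2 - of_nat k" by simp_all
    then show ?thesis by (metis gbinomial_Suc_Suc add.commute)
  qed
  have "skew_gbinomial_sum A B (Suc n) = skew_gbinomial_sum (A - 1) B (Suc n) +
      (\<Sum>k\<le>n. ((A - 2 - of_nat k) gchoose k) * ((B + of_nat (Suc k)) gchoose (n - k)))"
    using pascal by (simp add: split_first distrib_right sum.distrib)
  also have "(\<Sum>k\<le>n. ((A - 2 - of_nat k) gchoose k) * ((B + of_nat (Suc k)) gchoose (n - k)))
      = skew_gbinomial_sum (A - 2) (B + 1) n"
    unfolding skew_gbinomial_sum_def by (intro sum.cong) (simp_all add: algebra_simps)
  finally show ?thesis .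
qed

lemma skew_gbinomial_sum_shift_1:
  "skew_gbinomial_sum (A + 1) (B - 1) n = skew_gbinomial_sum A B n"
proof (induction n arbitrary: A B)
  case 0
  show ?case by simp
next
  case (Suc n)
  have "skew_gbinomial_sum (A + 1) (B - 1) (Suc n) =
      skew_gbinomial_sum A (B - 1) (Suc n) + skew_gbinomial_sum (A - 1) B n"
    using skew_gbinomial_sum_Suc_left[of "A + 1" "B - 1" n] by (simp add: algebra_simps)
  also have "skew_gbinomial_sum (A - 1) B n = skew_gbinomial_sum A (B - 1) n"
    using Suc.IH[of "A - 1" B] by simp
  finally show ?case
    using skew_gbinomial_sum_Suc_right[of A B n] by simp
qed

lemma skew_gbinomial_sum_shift_of_nat:
  "skew_gbinomial_sum (A + of_nat m) (B - of_nat m) n = skew_gbinomial_sum A B n"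
proof (induction m)
  case 0
  show ?case by simp
next
  case (Suc m)
  then show ?case
    using skew_gbinomial_sum_shift_1[of "A + of_nat m" "B - of_nat m" n]
    by (simp add: algebra_simps)
qed

lemma poly_eq_const_if_of_nat:
  fixes p :: "'a::{idom, ring_char_0} poly"
  assumes "\<And>m. poly p (of_nat m) = c"
  shows "poly p x = c"
proof -
  have "range (of_nat :: nat \<Rightarrow> 'a) \<subseteq> {x. poly (p - [:c:]) x = 0}"
    using assms by auto
  moreover have "infinite (range (of_nat :: nat \<Rightarrow> 'a))"
    by (simp add: finite_image_iff inj_of_nat)
  ultimately have "p - [:c:] = 0"
    using poly_roots_finite finite_subset by blast
  then show ?thesis by simp
qed

lemma gbinomial_linear_poly:
  "\<exists>p. \<forall>t. poly p t = ((a + b * t) gchoose k :: 'a::field_char_0)"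
proof
  show "\<forall>t. poly (smult (1 / fact k) (\<Prod>i<k. [:a - of_nat i, b:])) t = (a + b * t) gchoose k"
    by (simp add: gbinomial_prod_rev poly_prod algebra_simps atLeast0LessThan)
qed

lemma skew_gbinomial_sum_shift_poly:
  "\<exists>p. \<forall>t. poly p t = skew_gbinomial_sum (A + t) (B - t) n"
proof -
  have "\<exists>p. \<forall>t. poly p t = ((A - of_nat k + 1 * t) gchoose k) * ((B + of_nat k + (-1) * t) gchoose (n - k))"
    for k
  proof -
    obtain p q where "\<forall>t. poly p t = (A - of_nat k + 1 * t) gchoose k"
      and "\<forall>t. poly q t = (B + of_nat k + (-1) * t) gchoose (n - k)"
      using gbinomial_linear_poly by metis
    then show ?thesis by (intro exI[of _ "p * q"]) simp
  qed
  then obtain P where P: "\<And>k t. poly (P k) t =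
      ((A - of_nat k + 1 * t) gchoose k) * ((B + of_nat k + (-1) * t) gchoose (n - k))"
    by metis
  show ?thesis
    by (rule exI[of _ "\<Sum>k\<le>n. P k"]) (simp add: poly_sum P skew_gbinomial_sum_def algebra_simps)
qed

lemma skew_gbinomial_sum_shift:
  "skew_gbinomial_sum (A + t) (B - t) n = skew_gbinomial_sum A B n"
proof -
  obtain p where "\<And>t. poly p t = skew_gbinomial_sum (A + t) (B - t) n"
    using skew_gbinomial_sum_shift_poly by blast
  then show ?thesis
    using poly_eq_const_if_of_nat[of p] skew_gbinomial_sum_shift_of_nat by metis
qed

lemma skew_gbinomial_sum_eq_right_0:
  "skew_gbinomial_sum A B n = skew_gbinomial_sum (A + B) 0 n"
  using skew_gbinomial_sum_shift[of A B B n] by simp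

lemma skew_gbinomial_sum_right_0_Suc:
  "skew_gbinomial_sum A 0 (Suc n) = skew_gbinomial_sum (A - 1) 0 (Suc n) + skew_gbinomial_sum (A - 1) 0 n"
  using skew_gbinomial_sum_Suc_right[of A 0 n] skew_gbinomial_sum_eq_right_0[of A "- 1"] by simp

lemma skew_gbinomial_sum_of_nat_minus_1:
  "skew_gbinomial_sum (of_nat n - 1) 0 n = (-1) ^ n"
proof (cases n)
  case 0
  then show ?thesis by simp
next
  case (Suc n')
  have vanishing: "((of_nat n - 1 - of_nat k :: 'a) gchoose k) * (of_nat k gchoose (n - k)) = 0"
    if "k \<le> n'" for k
  proof -
    have shifted_nat: "(of_nat n - 1 - of_nat k :: 'a) = of_nat (n' - k)"
      using that Suc by (simp add: of_nat_diff)
    have "(n' - k) choose k = 0 \<or> k choose (n - k) = 0"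
      using that Suc by auto
    then show ?thesis
      unfolding shifted_nat by (auto simp flip: binomial_gbinomial)
  qed
  have "skew_gbinomial_sum (of_nat n - 1) 0 n =
      (\<Sum>k\<le>n'. ((of_nat n - 1 - of_nat k :: 'a) gchoose k) * (of_nat k gchoose (n - k)))
      + ((of_nat n - 1 - of_nat n) gchoose n) * (of_nat n gchoose (n - n))"
    unfolding skew_gbinomial_sum_def Suc by simp
  also have "\<dots> = (-1 gchoose n)"
    using vanishing by (simp add: sum.neutral)
  also have "\<dots> = (-1) ^ n"
    using gbinomial_minus[of "1::'a" n] by (simp add: binomial_gbinomial[of n n, symmetric])
  finally show ?thesis .
qed

lemma l_eq_skew_gbinomial_sum:
  assumes "j \<le> i"
  shows "l i j = skew_gbinomial_sum (of_nat i - 1) 0 (i - j)"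
proof -
  have "l i j = skew_gbinomial_sum ((of_nat i - 1) / 2) ((of_nat i - 1) / 2) (i - j)"
    using assms by (simp add: l_def lsum_def skew_gbinomial_sum_def atLeast0AtMost)
  also have "\<dots> = skew_gbinomial_sum (of_nat i - 1) 0 (i - j)"
    by (subst skew_gbinomial_sum_eq_right_0) simp
  finally show ?thesis .
qed

theorem proposition4p4:
  shows "(\<forall>i. l i 0 = (-1) ^ i) \<and> (\<forall>i. l i i = 1) \<and>
         (\<forall>i j. 1 \<le> i \<and> 1 \<le> j \<and> j \<le> i \<longrightarrow> l i j = l (i - 1) (j - 1) + l (i - 1) j)"
proof (intro conjI allI impI)
  fix i :: nat
  show "l i 0 = (-1) ^ i"
    by (simp add: l_eq_skew_gbinomial_sum skew_gbinomial_sum_of_nat_minus_1)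
next
  fix i :: nat
  show "l i i = 1"
    by (simp add: l_eq_skew_gbinomial_sum)
next
  fix i j :: nat
  assume "1 \<le> i \<and> 1 \<le> j \<and> j \<le> i"
  then obtain i' j' where ij: "i = Suc i'" "j = Suc j'" "j' \<le> i'"
    by (metis Suc_le_D Suc_le_mono One_nat_def)
  show "l i j = l (i - 1) (j - 1) + l (i - 1) j"
  proof (cases "j' = i'")
    case True
    then show ?thesis
      using ij by (simp add: l_eq_skew_gbinomial_sum l_def lsum_def)
  next
    case False
    with ij obtain m where "i - j = Suc m" "i - 1 - j = m"
      by (metis Suc_diff_Suc diff_Suc_1 diff_Suc_Suc le_neq_implies_less)
    then show ?thesis
      using ij skew_gbinomial_sum_right_0_Suc[of "of_nat i' :: complex" m]
      by (simp add: l_eq_skew_gbinomial_sum)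
  qed
qed

end
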